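(* Let $Y$ be a connected, non-contractible $T_1$-space. Then $Y$ is not homotopy equivalent to any finite topological space. *)

theory Defs
  imports "HOL-Analysis.Analysis"
begin

end

theory Submission
  imports Defs
begin

(* If Y is homotopy equivalent to a finite space X via f : Y \<rightarrow> X and g : X \<rightarrow> Y, then g \<circ> f is
   homotopic to the identity of Y. Its image is connected (Y is connected) and finite (it lies
   in g(X)); a finite subspace of a T1 space is discrete, so the image is a single point.
   Hence the identity of Y is homotopic to a constant map, i.e. Y is contractible. *)

lemma t1_space_connectedin_finite_subsingleton:
  assumes "t1_space Y" and "connectedin Y S" and "finite S"
  obtains a where "S \<subseteq> {a}"
proof -
  have S: "S \<subseteq> topspace Y"
    using assms(2) connectedin_subset_topspace by blast
  have "subtopology Y S = discrete_topology S"
    using subtopology_eq_discrete_topology_finite[OF assms(1) S assms(3)] .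
  moreover have "connectedin (subtopology Y S) S"
    using assms(2) S by (simp add: connectedin_subtopology)
  ultimately show thesis
    using that by (metis connectedin_discrete_topology)
qed

lemma continuous_map_through_finite_space_constant:
  assumes "connected_space Y" and "t1_space Z" and "finite (topspace X)"
    and f: "continuous_map Y X f" and g: "continuous_map X Z g"
  obtains a where "\<And>y. y \<in> topspace Y \<Longrightarrow> g (f y) = a"
proof -
  let ?S = "(g \<circ> f) ` topspace Y"
  have "connectedin Z ?S"
    using connectedin_continuous_map_image[OF continuous_map_compose[OF f g]] assms(1)
    by (simp add: connectedin_topspace)
  moreover have "finite ?S"
  proof (rule finite_subset)
    show "?S \<subseteq> g ` topspace X"
      using f by (auto simp: continuous_map_def)
  qed (use assms(3) in blast)
  ultimately obtain a where "?S \<subseteq> {a}"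
    using t1_space_connectedin_finite_subsingleton[OF assms(2)] by blast
  then show thesis
    using that by (metis comp_apply image_subset_iff singletonD)
qed

lemma contractible_space_if_homotopic_id_constant:
  assumes "homotopic_with (\<lambda>x. True) Y Y h id" and "\<And>y. y \<in> topspace Y \<Longrightarrow> h y = a"
  shows "contractible_space Y"
proof -
  have "homotopic_with (\<lambda>x. True) Y Y (\<lambda>y. a) id"
    using assms(1) by (rule homotopic_with_eq) (use assms(2) in auto)
  then show ?thesis
    unfolding contractible_space_def by (metis homotopic_with_sym)
qed

theorem mainTheorem6:
  fixes Y :: "'a topology" and X :: "'b topology"
  assumes "connected_space Y"
    and "\<not> contractible_space Y"
    and "t1_space Y"
    and "finite (topspace X)"
  shows "\<not> (Y homotopy_equivalent_space X)"
proof
  assume "Y homotopy_equivalent_space X"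
  then obtain f g where f: "continuous_map Y X f" and g: "continuous_map X Y g"
    and gf: "homotopic_with (\<lambda>x. True) Y Y (g \<circ> f) id"
    unfolding homotopy_equivalent_space_def by blast
  obtain a where "\<And>y. y \<in> topspace Y \<Longrightarrow> g (f y) = a"
    using continuous_map_through_finite_space_constant[OF assms(1,3,4) f g] by blast
  then have "contractible_space Y"
    using contractible_space_if_homotopic_id_constant[OF gf] by simp
  with assms(2) show False by contradiction
qed

end
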